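(* Let $c\in\mathbb{R}$, let $I_c=[0,-1/c]$ if $c<0$ and $I_c=[0,+\infty)$ if $c\geq0$, and let $n>0$ be real with $n>c$ if $c\geq 0$, or $n=-cl$ for some $l\in\mathbb{N}$ if $c<0$. For $k\in\mathbb{N}_0$, $x\in I_c$ let $$p_{n,k}^{[c]}(x)=(-1)^k\binom{-n/c}{k}(cx)^k(1+cx)^{-\frac{n}{c}-k}\ (c\neq0),\qquad p_{n,k}^{[0]}(x)=\frac{(nx)^k}{k!}e^{-nx},$$ let $S_{n,c}(x)=\sum_{k=0}^\infty\big(p_{n,k}^{[c]}(x)\big)^2$ and let $R_{n,c}(x)=-\log S_{n,c}(x)$ (Rényi entropy of order 2). Then: (i) for $c\geq 0$, $R_{n,c}$ is concave and increasing on $[0,+\infty)$; (ii) for every $c\in\mathbb{R}$, $u=R_{n,c}'$ satisfies on $I_c$ the Riccati equation $$x(1+cx)(1+2cx)u'(x)=x(1+cx)(1+2cx)u^2(x)-\big(4(n+c)x(1+cx)+1\big)u(x)+2n(1+2cx).$$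
   Context: For $\alpha\in\mathbb{R}$ and $k\in\mathbb{N}$, $\binom{\alpha}{k}=\frac{\alpha(\alpha-1)\cdots(\alpha-k+1)}{k!}$ and $\binom{\alpha}{0}=1$. The cases $c=-1,0,1$ give the binomial, Poisson and negative binomial distributions. *)

theory Defs
  imports "HOL-Analysis.Analysis"
begin

text \<open>Real power b^e with the conventions needed for the basis functions:
  for b > 0 it is b powr e; for b \<le> 0 and e a nonnegative integer it is the
  ordinary power (so that (1+cx)^(l-k) with 1+cx = 0 is evaluated correctly
  when c < 0, n = -c l); otherwise 0 (such terms only occur multiplied by a
  vanishing binomial coefficient).\<close>
definition rpow :: "real \<Rightarrow> real \<Rightarrow> real" where
  "rpow b e = (if b > 0 then b powr e
               else if e \<in> \<int> \<and> e \<ge> 0 then b ^ nat \<lfloor>e\<rfloor> else 0)"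

definition Icset :: "real \<Rightarrow> real set" where
  "Icset c = (if c < 0 then {0 .. -1/c} else {0..})"

definition pnk :: "real \<Rightarrow> real \<Rightarrow> nat \<Rightarrow> real \<Rightarrow> real" where
  "pnk c n k x =
     (if c = 0 then (n * x) ^ k / fact k * exp (- n * x)
      else (-1) ^ k * ((- n / c) gchoose k) * (c * x) ^ k * rpow (1 + c * x) (- n / c - real k))"

definition Snc :: "real \<Rightarrow> real \<Rightarrow> real \<Rightarrow> real" where
  "Snc c n x = (\<Sum>k. (pnk c n k x)\<^sup>2)"

definition Rnc :: "real \<Rightarrow> real \<Rightarrow> real \<Rightarrow> real" where
  "Rnc c n x = - ln (Snc c n x)"

end

theory Submission
  imports Defs
begin

text \<open>Squaring the basis functions gives closed forms for \<open>S = S\<^sub>n\<^sub>,\<^sub>c\<close>: if \<open>c \<noteq> 0\<close> and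
  \<open>1 + c x > 0\<close> then \<open>S(x) = (1 + c x) powr (-2n/c) \<cdot> F((c x / (1 + c x))\<^sup>2)\<close>, where \<open>F\<close> is the
  hypergeometric series \<open>\<^sub>2F\<^sub>1(n/c, n/c; 1; z)\<close>, and \<open>S(x) = exp(-2n x) \<cdot> G(x\<^sup>2)\<close> for \<open>c = 0\<close>,
  where \<open>G(z) = \<Sum>\<^sub>k n\<^sup>2\<^sup>k z\<^sup>k / (k!)\<^sup>2\<close>. Substituting these into the differential equations of
  \<open>F\<close> and \<open>G\<close> shows that \<open>S\<close> solves the linear equation \<open>P S'' + Q S' + R S = 0\<close> built from the
  coefficients \<open>P, Q, R\<close> of the Riccati equation, so that \<open>u = R\<^sub>n\<^sub>,\<^sub>c' = - S'/S\<close> solves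
  \<open>P u' = P u\<^sup>2 - Q u + R\<close>. For \<open>c < 0\<close> the function \<open>S\<close> is a polynomial, and the linear
  equation extends by continuity to the endpoint \<open>-1/c\<close> of \<open>I\<^sub>c\<close>, where \<open>1 + c x = 0\<close> and the
  closed form breaks down. For \<open>c \<ge> 0\<close> a comparison argument
  with the barrier \<open>2n / (1 + 2 c x)\<close> shows \<open>u > 0\<close> and \<open>u' < 0\<close> on \<open>[0, \<infinity>)\<close>, i.e. \<open>R\<^sub>n\<^sub>,\<^sub>c\<close>
  is increasing and concave.\<close>

section \<open>The linear equation and its Riccati transform\<close>

definition ode_P :: "real \<Rightarrow> real \<Rightarrow> real" where
  "ode_P c x = x * (1 + c * x) * (1 + 2 * c * x)"

definition ode_Q :: "real \<Rightarrow> real \<Rightarrow> real \<Rightarrow> real" where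
  "ode_Q c n x = 4 * (n + c) * x * (1 + c * x) + 1"

definition ode_R :: "real \<Rightarrow> real \<Rightarrow> real \<Rightarrow> real" where
  "ode_R c n x = 2 * n * (1 + 2 * c * x)"

lemma riccati_of_second_order_linear:
  fixes S S1 S2 :: "real \<Rightarrow> real" and P Q R x :: real
  assumes "(S has_real_derivative S1 x) (at x)" "(S1 has_real_derivative S2 x) (at x)" "S x \<noteq> 0"
    and ode: "P * S2 x + Q * S1 x + R * S x = 0"
  shows "((\<lambda>y. - S1 y / S y) has_real_derivative (S1 x / S x)\<^sup>2 - S2 x / S x) (at x)"
    and "P * ((S1 x / S x)\<^sup>2 - S2 x / S x) = P * (- S1 x / S x)\<^sup>2 - Q * (- S1 x / S x) + R"
proof -
  show "((\<lambda>y. - S1 y / S y) has_real_derivative (S1 x / S x)\<^sup>2 - S2 x / S x) (at x)"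
    using assms by (auto intro!: derivative_eq_intros simp: field_simps power2_eq_square)
  have "P * ((S1 x / S x)\<^sup>2 - S2 x / S x) - (P * (- S1 x / S x)\<^sup>2 - Q * (- S1 x / S x) + R)
          = - (P * S2 x + Q * S1 x + R * S x) / S x"
    using \<open>S x \<noteq> 0\<close> by (simp add: field_simps power2_eq_square)
  then show "P * ((S1 x / S x)\<^sup>2 - S2 x / S x) = P * (- S1 x / S x)\<^sup>2 - Q * (- S1 x / S x) + R"
    using ode by simp
qed

lemma concave_strict_mono_on_nonneg:
  fixes f u u' :: "real \<Rightarrow> real"
  assumes "\<And>x. x \<ge> 0 \<Longrightarrow> (f has_real_derivative u x) (at x)"
    and "\<And>x. x \<ge> 0 \<Longrightarrow> (u has_real_derivative u' x) (at x)"
    and "\<And>x. x \<ge> 0 \<Longrightarrow> u x > 0 \<and> u' x < 0"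
  shows "concave_on {0..} f \<and> strict_mono_on {0..} f"
proof
  show "concave_on {0..} f"
    unfolding concave_on_def
  proof (rule convex_on_realI[where f' = "\<lambda>x. - u x"])
    show "((\<lambda>x. - f x) has_real_derivative - u x) (at x)" if "x \<in> {0..}" for x
      using assms(1) that by (auto intro!: derivative_intros)
    show "- u x \<le> - u y" if "x \<in> {0..}" "y \<in> {0..}" "x \<le> y" for x y
    proof -
      have "u y \<le> u x"
      proof (rule DERIV_nonpos_imp_nonincreasing[OF \<open>x \<le> y\<close>])
        show "\<exists>d. (u has_real_derivative d) (at t) \<and> d \<le> 0" if "x \<le> t" "t \<le> y" for t
          using assms(2,3)[of t] that \<open>x \<in> {0..}\<close> by (auto intro: less_imp_le)
      qed
      then show ?thesis by simp
    qed
  qed simp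
  show "strict_mono_on {0..} f"
  proof (rule strict_mono_onI)
    show "f r < f s" if "r \<in> {0..}" "s \<in> {0..}" "r < s" for r s
    proof (rule DERIV_pos_imp_increasing[OF \<open>r < s\<close>])
      show "\<exists>d. (f has_real_derivative d) (at t) \<and> d > 0" if "r \<le> t" "t \<le> s" for t
        using assms(1,3)[of t] that \<open>r \<in> {0..}\<close> by auto
    qed
  qed
qed

lemma DERIV_unique_on_open:
  assumes "(f has_real_derivative D) (at x)" "(g has_real_derivative D') (at x)"
    and "open V" "x \<in> V" "\<And>y. y \<in> V \<Longrightarrow> f y = g y"
  shows "D = D'"
proof -
  have "(g has_real_derivative D) (at x)"
    by (rule has_field_derivative_transform_within_open[OF assms(1,3,4,5)])
  then show ?thesis using assms(2) by (rule DERIV_unique)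
qed

section \<open>A comparison argument for \<open>c \<ge> 0\<close>\<close>

lemma convex_quadratic_root_lt:
  fixes P Q R u b g :: real
  assumes "P > 0" "P * u\<^sup>2 - Q * u + R = 0" "P * b\<^sup>2 - Q * b + R < 0" "P * g\<^sup>2 - Q * g + R < 0"
    and "u < g"
  shows "u < b"
proof (rule ccontr)
  assume "\<not> u < b"
  then have "b \<le> u" by simp
  define l where "l = (g - u) / (g - b)"
  have "g - b > 0" using \<open>b \<le> u\<close> \<open>u < g\<close> by simp
  then have l: "0 < l" "l \<le> 1" and "l * (g - b) = g - u"
    using \<open>b \<le> u\<close> \<open>u < g\<close> by (auto simp: l_def field_simps)
  then have ul: "u = l * b + (1 - l) * g" by (simp add: algebra_simps)
  have "P * u\<^sup>2 - Q * u + R = l * (P * b\<^sup>2 - Q * b + R) + (1 - l) * (P * g\<^sup>2 - Q * g + R)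
                               - P * l * (1 - l) * (b - g)\<^sup>2"
    unfolding ul by (simp add: algebra_simps power2_eq_square)
  moreover have "l * (P * b\<^sup>2 - Q * b + R) < 0" "(1 - l) * (P * g\<^sup>2 - Q * g + R) \<le> 0"
    using l assms by (simp_all add: mult_pos_neg mult_nonneg_nonpos)
  moreover have "P * l * (1 - l) * (b - g)\<^sup>2 \<ge> 0" using l assms by simp
  ultimately show False using assms(2) by linarith
qed

lemma riccati_rhs_at_barrier:
  assumes "1 + 2 * c * x \<noteq> 0"
  shows "ode_P c x * (2 * n / (1 + 2 * c * x))\<^sup>2 - ode_Q c n x * (2 * n / (1 + 2 * c * x)) + ode_R c n x
           = - 4 * n\<^sup>2 * x * (1 + c * x) / (1 + 2 * c * x)"
proof -
  define s where "s = 1 + 2 * c * x"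
  have "2 * c * x = s - 1" by (simp add: s_def)
  with assms show ?thesis
    unfolding s_def[symmetric] ode_P_def ode_Q_def ode_R_def
    by (simp add: field_simps power2_eq_square) algebra
qed

text \<open>With \<open>'\<close> denoting \<open>d/dx\<close>, \<open>A = P' Q - P Q'\<close> and \<open>B = P' R - P R'\<close>: at a zero \<open>u\<close> of
  \<open>P u\<^sup>2 - Q u + R\<close> its \<open>x\<close>-derivative \<open>P' u\<^sup>2 - Q' u + R'\<close>, times \<open>P\<close>, equals \<open>A u - B\<close>.\<close>

lemma riccati_rhs_at_quotient_neg:
  fixes x c n :: real
  assumes "x > 0" "c \<ge> 0" "n > c"
  defines "A \<equiv> 1 + 6*c*x + (8*(n+c)*c + 6*c^2)*x^2 + 16*(n+c)*c^2*x^3 + 8*(n+c)*c^3*x^4"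
    and "B \<equiv> 2*n + 12*n*c*x + 24*n*c^2*x^2 + 16*n*c^3*x^3"
  shows "ode_P c x * B\<^sup>2 - ode_Q c n x * A * B + ode_R c n x * A\<^sup>2 < 0"
proof -
  define d where "d = n - c"
  have n: "n = c + d" and "d > 0" using assms by (auto simp: d_def)
  define E where "E = 12*x*c*d + 8*x*c^2 + 28*x^2*c*d^2 + 108*x^2*c^2*d + 80*x^2*c^3 + 64*x^3*c*d^3 +
      264*x^3*c^2*d^2 + 632*x^3*c^3*d + 432*x^3*c^4 + 448*x^4*c^2*d^3 + 1424*x^4*c^3*d^2 +
      2472*x^4*c^4*d + 1496*x^4*c^5 + 1344*x^5*c^3*d^3 + 4064*x^5*c^4*d^2 + 6096*x^5*c^5*d +
      3376*x^5*c^6 + 2240*x^6*c^4*d^3 + 6720*x^6*c^5*d^2 + 9408*x^6*c^6*d + 4928*x^6*c^7 +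
      2176*x^7*c^5*d^3 + 6528*x^7*c^6*d^2 + 8832*x^7*c^7*d + 4480*x^7*c^8 + 1152*x^8*c^6*d^3 +
      3456*x^8*c^7*d^2 + 4608*x^8*c^8*d + 2304*x^8*c^9 + 256*x^9*c^7*d^3 + 768*x^9*c^8*d^2 +
      1024*x^9*c^9*d + 512*x^9*c^10"
  have "ode_P c x * B\<^sup>2 - ode_Q c n x * A * B + ode_R c n x * A\<^sup>2 = - (4*x*d^2 + E)"
    unfolding ode_P_def ode_Q_def ode_R_def A_def B_def E_def n by algebra
  moreover have "0 < 4*x*d^2" using assms \<open>d > 0\<close> by simp
  moreover have "0 \<le> E" unfolding E_def using assms \<open>d > 0\<close> by (intro add_nonneg_nonneg mult_nonneg_nonneg) auto
  ultimately show ?thesis by linarith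
qed

lemma riccati_rhs_deriv_neg_at_root:
  fixes x c n u :: real
  assumes "x > 0" "c \<ge> 0" "n > c"
    and root: "ode_P c x * u\<^sup>2 - ode_Q c n x * u + ode_R c n x = 0"
    and below: "u < 2 * n / (1 + 2 * c * x)"
  shows "(1 + 6*c*x + 6*c^2*x^2) * u\<^sup>2 - 4*(n+c)*(1+2*c*x) * u + 4*n*c < 0"
proof -
  define A where "A = 1 + 6*c*x + (8*(n+c)*c + 6*c^2)*x^2 + 16*(n+c)*c^2*x^3 + 8*(n+c)*c^3*x^4"
  define B where "B = 2*n + 12*n*c*x + 24*n*c^2*x^2 + 16*n*c^3*x^3"
  have "A > 0" unfolding A_def using assms by (intro add_pos_nonneg mult_nonneg_nonneg) auto
  have "ode_P c x > 0" unfolding ode_P_def using assms by (simp add: add_pos_nonneg)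
  have s: "1 + 2 * c * x > 0" "1 + c * x > 0" using assms by (simp_all add: add_pos_nonneg)
  have "ode_P c x * (B/A)\<^sup>2 - ode_Q c n x * (B/A) + ode_R c n x
          = (ode_P c x * B\<^sup>2 - ode_Q c n x * A * B + ode_R c n x * A\<^sup>2) / A\<^sup>2"
    using \<open>A > 0\<close> by (simp add: field_simps power2_eq_square)
  also have "\<dots> < 0"
    using riccati_rhs_at_quotient_neg[OF assms(1-3)] \<open>A > 0\<close> unfolding A_def B_def
    by (simp add: divide_neg_pos)
  finally have "ode_P c x * (B/A)\<^sup>2 - ode_Q c n x * (B/A) + ode_R c n x < 0" .
  moreover have "ode_P c x * (2 * n / (1 + 2 * c * x))\<^sup>2 - ode_Q c n x * (2 * n / (1 + 2 * c * x))
                   + ode_R c n x < 0"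
    using riccati_rhs_at_barrier[of c x n] s assms by (simp add: divide_neg_pos)
  ultimately have "u < B / A"
    using convex_quadratic_root_lt[OF \<open>ode_P c x > 0\<close> root _ _ below] by blast
  then have "A * u - B < 0" using \<open>A > 0\<close> by (simp add: field_simps)
  moreover have "ode_P c x * ((1 + 6*c*x + 6*c^2*x^2) * u\<^sup>2 - 4*(n+c)*(1+2*c*x) * u + 4*n*c) = A * u - B"
    using root unfolding A_def B_def ode_P_def ode_Q_def ode_R_def by algebra
  ultimately have "ode_P c x * ((1 + 6*c*x + 6*c^2*x^2) * u\<^sup>2 - 4*(n+c)*(1+2*c*x) * u + 4*n*c) < 0"
    by linarith
  then show ?thesis using \<open>ode_P c x > 0\<close> by (simp only: mult_less_0_iff) linarith
qed

lemma first_zero_in_interval: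
  fixes m :: "real \<Rightarrow> real"
  assumes cont: "continuous_on {a..b} m" and "a \<le> b" "m a > 0" "m b \<le> 0"
  obtains x0 where "a < x0" "x0 \<le> b" "m x0 = 0" "\<forall>t\<in>{a..<x0}. m t > 0"
proof -
  define Z where "Z = {t \<in> {a..b}. m t = 0}"
  have zero_before: "\<exists>z\<in>Z. z \<le> t" if "t \<in> {a..b}" "m t \<le> 0" for t
  proof -
    have "a \<le> t" "continuous_on {a..t} m" using cont that by (auto intro: continuous_on_subset)
    then obtain z where "a \<le> z" "z \<le> t" "m z = 0"
      using IVT2'[of m t 0 a] \<open>m t \<le> 0\<close> \<open>m a > 0\<close> by auto
    then show ?thesis using that by (auto simp: Z_def)
  qed
  have "Z \<noteq> {}" using zero_before[of b] \<open>a \<le> b\<close> \<open>m b \<le> 0\<close> by auto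
  moreover have "closed Z" unfolding Z_def by (intro continuous_closed_preimage_constant cont) simp
  moreover have "bdd_below Z" by (auto simp: Z_def intro!: bdd_belowI[of _ a])
  ultimately have "Inf Z \<in> Z" by (intro closed_contains_Inf)
  moreover have "m t > 0" if "t \<in> {a..<Inf Z}" for t
  proof (rule ccontr)
    assume "\<not> m t > 0"
    moreover have "t \<in> {a..b}" using that \<open>Inf Z \<in> Z\<close> by (auto simp: Z_def)
    ultimately obtain z where "z \<in> Z" "z \<le> t" using zero_before by force
    then have "Inf Z \<le> t" using \<open>bdd_below Z\<close> by (meson cInf_lower order_trans)
    then show False using that by simp
  qed
  moreover have "a \<noteq> Inf Z" using \<open>Inf Z \<in> Z\<close> \<open>m a > 0\<close> by (auto simp: Z_def)
  ultimately show ?thesis using that[of "Inf Z"] by (force simp: Z_def)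
qed

lemma DERIV_pos_imp_smaller_on_left:
  assumes "(f has_real_derivative l) (at x)" "l > 0" "a < x"
  obtains t where "a < t" "t < x" "f t < f x"
proof -
  obtain d where "d > 0" and d: "\<And>h. 0 < h \<Longrightarrow> h < d \<Longrightarrow> f (x - h) < f x"
    using has_real_derivative_pos_inc_left[OF assms(1,2)] by blast
  define h where "h = min d (x - a) / 2"
  have "0 < h" "h < d" "h < x - a" using \<open>d > 0\<close> \<open>a < x\<close> by (auto simp: h_def)
  then show ?thesis using that[of "x - h"] d by simp
qed

lemma pos_and_neg_on_right_interval:
  fixes k v :: "real \<Rightarrow> real"
  assumes "(k has_real_derivative D) (at a)" "D > 0" "k a = 0" "isCont v a" "v a < 0"
  obtains \<delta> where "\<delta> > 0" "\<And>t. a < t \<Longrightarrow> t \<le> a + \<delta> \<Longrightarrow> k t > 0 \<and> v t < 0"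
proof -
  obtain d1 where "d1 > 0" and d1: "\<And>h. 0 < h \<Longrightarrow> h < d1 \<Longrightarrow> k (a + h) > 0"
    using has_real_derivative_pos_inc_right[OF assms(1,2)] \<open>k a = 0\<close> by force
  have "eventually (\<lambda>t. v t < 0) (at a)"
    using assms(4,5) unfolding isCont_def by (intro order_tendstoD(2)) auto
  then obtain d2 where "d2 > 0" and d2: "\<And>t. t \<noteq> a \<Longrightarrow> dist t a < d2 \<Longrightarrow> v t < 0"
    unfolding eventually_at by auto
  have "k t > 0 \<and> v t < 0" if "a < t" "t \<le> a + min d1 d2 / 2" for t
    using d1[of "t - a"] d2[of t] that \<open>d1 > 0\<close> \<open>d2 > 0\<close> by (simp add: dist_real_def)
  then show ?thesis using that[of "min d1 d2 / 2"] \<open>d1 > 0\<close> \<open>d2 > 0\<close> by simp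
qed

lemma riccati_deriv_lt_barrier_deriv:
  assumes "x > 0" "c \<ge> 0" "n > c"
    and "ode_P c x * v = ode_P c x * u\<^sup>2 - ode_Q c n x * u + ode_R c n x"
    and "u = 2 * n / (1 + 2 * c * x)"
  shows "v < - 4 * n * c / (1 + 2 * c * x)\<^sup>2"
proof -
  define s where "s = 1 + 2 * c * x"
  have "s > 0" using assms by (simp add: s_def add_pos_nonneg)
  have "ode_P c x * v = - 4 * n\<^sup>2 * x * (1 + c * x) / s"
    using assms(4,5) riccati_rhs_at_barrier[of c x n] \<open>s > 0\<close> by (simp add: s_def)
  then have "x * (1 + c * x) * (s * v) = x * (1 + c * x) * (- 4 * n\<^sup>2 / s)"
    using \<open>s > 0\<close> unfolding ode_P_def s_def[symmetric] by (simp add: field_simps)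
  moreover have "x * (1 + c * x) > 0" using assms by (simp add: add_pos_nonneg)
  ultimately have "s * v = - 4 * n\<^sup>2 / s" by (metis less_irrefl mult_left_cancel)
  then have "v = - 4 * n\<^sup>2 / s\<^sup>2" using \<open>s > 0\<close> by (simp add: field_simps power2_eq_square)
  also have "\<dots> < - 4 * n * c / s\<^sup>2"
  proof -
    have "n * c < n * n" using assms by (intro mult_strict_left_mono) auto
    then show ?thesis using \<open>s > 0\<close> by (intro divide_strict_right_mono) (auto simp: power2_eq_square)
  qed
  finally show ?thesis by (simp add: s_def)
qed

lemma riccati_rhs_pos_of_nonpos:
  assumes "x > 0" "c \<ge> 0" "n > 0" "u \<le> 0"
  shows "ode_P c x * u\<^sup>2 - ode_Q c n x * u + ode_R c n x > 0"
proof -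
  have "1 + c * x > 0" "1 + 2 * c * x > 0" using assms by (simp_all add: add_pos_nonneg)
  then have "ode_P c x \<ge> 0" "ode_R c n x > 0" "0 \<le> 4 * (n + c) * x * (1 + c * x)"
    using assms unfolding ode_P_def ode_R_def by simp_all
  then have "ode_Q c n x > 0" "ode_R c n x > 0" "ode_P c x \<ge> 0" by (simp_all add: ode_Q_def)
  moreover have "ode_Q c n x * u \<le> 0" using \<open>ode_Q c n x > 0\<close> \<open>u \<le> 0\<close> by (simp add: mult_nonneg_nonpos)
  moreover have "ode_P c x * u\<^sup>2 \<ge> 0" using \<open>ode_P c x \<ge> 0\<close> by simp
  ultimately show ?thesis by linarith
qed

text \<open>At a first
  failure point \<open>x0\<close> either \<open>u\<close> touches the barrier, but then it decreases faster than the barrier,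
  or \<open>u'(x0) = 0\<close>, and then the right-hand side of the Riccati equation, negative before \<open>x0\<close>,
  vanishes at \<open>x0\<close> with negative derivative.\<close>

lemma riccati_solution_below_barrier:
  fixes u v :: "real \<Rightarrow> real" and c n :: real
  assumes "c \<ge> 0" "n > c"
    and du: "\<And>x. x \<ge> 0 \<Longrightarrow> (u has_real_derivative v x) (at x)"
    and cont: "\<And>x. x \<ge> 0 \<Longrightarrow> isCont v x"
    and riccati: "\<And>x. x > 0 \<Longrightarrow> ode_P c x * v x = ode_P c x * (u x)\<^sup>2 - ode_Q c n x * u x + ode_R c n x"
    and u0: "u 0 = 2 * n" and v0: "v 0 = - 2 * n * (n + c)"
    and "t > 0"
  shows "u t < 2 * n / (1 + 2 * c * t) \<and> v t < 0"
proof -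
  have "n > 0" using assms by simp
  have P: "ode_P c t > 0" if "t > 0" for t
    using that \<open>c \<ge> 0\<close> unfolding ode_P_def by (simp add: add_pos_nonneg)
  define k where "k t = 2 * n / (1 + 2 * c * t) - u t" for t
  define h where "h t = ode_P c t * (u t)\<^sup>2 - ode_Q c n t * u t + ode_R c n t" for t
  have dk: "(k has_real_derivative - 4 * n * c / (1 + 2 * c * t)\<^sup>2 - v t) (at t)" if "t \<ge> 0" for t
  proof -
    have "1 + 2 * c * t > 0" using that \<open>c \<ge> 0\<close> by (simp add: add_pos_nonneg)
    then show ?thesis
      unfolding k_def by (auto intro!: derivative_eq_intros du[OF that] simp: field_simps power2_eq_square)
  qed
  have dh: "(h has_real_derivative (1 + 6*c*t + 6*c^2*t^2) * (u t)\<^sup>2 + 2 * ode_P c t * u t * v t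
              - 4*(n+c)*(1+2*c*t) * u t - ode_Q c n t * v t + 4*n*c) (at t)" if "t \<ge> 0" for t
    unfolding h_def ode_P_def ode_Q_def ode_R_def
    by (rule derivative_eq_intros du[OF that] refl | simp)+ (simp add: algebra_simps power2_eq_square)
  have hv: "h t = ode_P c t * v t" if "t > 0" for t
    using riccati[OF that] by (simp add: h_def)
  have "- 4 * n * c / (1 + 2 * c * 0)\<^sup>2 - v 0 = 2 * n * (n - c)" using v0 by (simp add: algebra_simps)
  then have D: "- 4 * n * c / (1 + 2 * c * 0)\<^sup>2 - v 0 > 0" using \<open>n > c\<close> \<open>n > 0\<close> by simp
  have "k 0 = 0" "v 0 < 0" using u0 v0 \<open>n > 0\<close> \<open>c \<ge> 0\<close> by (simp_all add: k_def mult_pos_pos)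
  then obtain \<delta> where "\<delta> > 0" and near: "\<And>t. 0 < t \<Longrightarrow> t \<le> \<delta> \<Longrightarrow> k t > 0 \<and> v t < 0"
    using pos_and_neg_on_right_interval[OF dk[OF order_refl] D _ cont[OF order_refl]] by (metis add_0)
  have "k t > 0 \<and> v t < 0"
  proof (rule ccontr)
    assume fail: "\<not> (k t > 0 \<and> v t < 0)"
    then have "t > \<delta>" using near \<open>t > 0\<close> by force
    define m where "m s = min (k s) (- v s)" for s
    have "isCont m s" if "s \<ge> 0" for s
      unfolding m_def by (intro continuous_intros DERIV_isCont[OF dk] cont that)
    then have "continuous_on {\<delta>..t} m"
      using \<open>\<delta> > 0\<close> by (intro continuous_at_imp_continuous_on) auto
    moreover have "\<delta> \<le> t" "m \<delta> > 0" "m t \<le> 0" using near[OF \<open>\<delta> > 0\<close>] fail \<open>t > \<delta>\<close> by (auto simp: m_def)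
    ultimately obtain x0 where "\<delta> < x0" "m x0 = 0" and before: "\<forall>s\<in>{\<delta>..<x0}. m s > 0"
      by (rule first_zero_in_interval)
    have "x0 > 0" using \<open>\<delta> > 0\<close> \<open>\<delta> < x0\<close> by simp
    have left: "k s > 0 \<and> v s < 0" if "0 < s" "s < x0" for s
      using near[OF \<open>0 < s\<close>] before that by (cases "s \<le> \<delta>") (auto simp: m_def)
    show False
    proof (cases "k x0 = 0")
      case True
      then have "v x0 < - 4 * n * c / (1 + 2 * c * x0)\<^sup>2"
        using riccati_deriv_lt_barrier_deriv[OF \<open>x0 > 0\<close> \<open>c \<ge> 0\<close> \<open>n > c\<close> riccati[OF \<open>x0 > 0\<close>]]
        by (simp add: k_def)
      then have "- 4 * n * c / (1 + 2 * c * x0)\<^sup>2 - v x0 > 0" by simp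
      then obtain s where "0 < s" "s < x0" "k s < k x0"
        using DERIV_pos_imp_smaller_on_left[OF dk[of x0]] \<open>x0 > 0\<close> by force
      then show False using left True by force
    next
      case False
      then have "v x0 = 0" "u x0 < 2 * n / (1 + 2 * c * x0)"
        using \<open>m x0 = 0\<close> by (auto simp: m_def k_def min_def split: if_splits)
      define D where "D = (1 + 6*c*x0 + 6*c^2*x0^2) * (u x0)\<^sup>2 - 4*(n+c)*(1+2*c*x0) * u x0 + 4*n*c"
      have "h x0 = 0" using hv[OF \<open>x0 > 0\<close>] \<open>v x0 = 0\<close> by simp
      then have "D < 0" unfolding D_def h_def
        by (rule riccati_rhs_deriv_neg_at_root[OF \<open>x0 > 0\<close> \<open>c \<ge> 0\<close> \<open>n > c\<close> _ \<open>u x0 < _\<close>])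
      have "((\<lambda>s. - h s) has_real_derivative - D) (at x0)"
        using DERIV_minus[OF dh[of x0]] \<open>x0 > 0\<close> \<open>v x0 = 0\<close> by (simp add: D_def)
      moreover have "- D > 0" using \<open>D < 0\<close> by simp
      ultimately obtain s where "0 < s" "s < x0" "- h s < - h x0"
        using DERIV_pos_imp_smaller_on_left \<open>x0 > 0\<close> by blast
      moreover have "h s < 0" using hv[OF \<open>0 < s\<close>] left[OF \<open>0 < s\<close> \<open>s < x0\<close>] P[OF \<open>0 < s\<close>]
        by (simp add: mult_pos_neg)
      ultimately show False using \<open>h x0 = 0\<close> by simp
    qed
  qed
  then show ?thesis by (simp add: k_def)
qed

lemma riccati_solution_pos_decreasing:
  fixes u v :: "real \<Rightarrow> real" and c n :: real
  assumes "c \<ge> 0" "n > c"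
    and du: "\<And>x. x \<ge> 0 \<Longrightarrow> (u has_real_derivative v x) (at x)"
    and cont: "\<And>x. x \<ge> 0 \<Longrightarrow> isCont v x"
    and riccati: "\<And>x. x > 0 \<Longrightarrow> ode_P c x * v x = ode_P c x * (u x)\<^sup>2 - ode_Q c n x * u x + ode_R c n x"
    and u0: "u 0 = 2 * n" and v0: "v 0 = - 2 * n * (n + c)"
    and "x \<ge> 0"
  shows "u x > 0 \<and> v x < 0"
proof -
  have "n > 0" using assms by simp
  show ?thesis
  proof (cases "x = 0")
    case True
    then show ?thesis using u0 v0 \<open>n > 0\<close> \<open>c \<ge> 0\<close> by (simp add: mult_pos_pos)
  next
    case False
    then have "x > 0" using \<open>x \<ge> 0\<close> by simp
    have "v x < 0" using riccati_solution_below_barrier[OF assms(1-7) \<open>x > 0\<close>] by simp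
    moreover have "ode_P c x > 0" using \<open>x > 0\<close> \<open>c \<ge> 0\<close> by (simp add: ode_P_def add_pos_nonneg)
    ultimately have "ode_P c x * v x < 0" by (simp add: mult_pos_neg)
    then have rhs: "ode_P c x * (u x)\<^sup>2 - ode_Q c n x * u x + ode_R c n x < 0"
      using riccati[OF \<open>x > 0\<close>] by simp
    have "u x > 0"
    proof (rule ccontr)
      assume "\<not> u x > 0"
      then have "u x \<le> 0" by simp
      with rhs show False using riccati_rhs_pos_of_nonpos[OF \<open>x > 0\<close> \<open>c \<ge> 0\<close> \<open>n > 0\<close>] by fastforce
    qed
    with \<open>v x < 0\<close> show ?thesis by simp
  qed
qed

text \<open>Since \<open>(-a gchoose k) = (-1)\<^sup>k (a)\<^sub>k / k!\<close>, \<open>hypergeom_fps a\<close> is the Gauss series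
  \<open>\<^sub>2F\<^sub>1(a, a; 1; z)\<close>, and \<open>bessel_fps m\<close> is \<open>I\<^sub>0(2 \<surd>(m z))\<close>.\<close>

definition hypergeom_fps :: "real \<Rightarrow> real fps" where
  "hypergeom_fps a = Abs_fps (\<lambda>k. ((-a) gchoose k)\<^sup>2)"

definition bessel_fps :: "real \<Rightarrow> real fps" where
  "bessel_fps m = Abs_fps (\<lambda>k. m ^ k / (fact k)\<^sup>2)"

lemma eval_fps_of_poly_mult:
  fixes f :: "real fps"
  assumes "norm z < fps_conv_radius f"
  shows "eval_fps (fps_of_poly p * f) z = poly p z * eval_fps f z"
  using assms by (simp add: eval_fps_mult)

lemma eval_fps_second_order_ode:
  fixes f :: "real fps"
  assumes ode: "fps_of_poly p2 * fps_deriv (fps_deriv f) + fps_of_poly p1 * fps_deriv f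
                  + fps_of_poly p0 * f = 0"
    and z: "norm z < fps_conv_radius f"
  shows "poly p2 z * eval_fps (fps_deriv (fps_deriv f)) z + poly p1 z * eval_fps (fps_deriv f) z
           + poly p0 z * eval_fps f z = 0"
proof -
  have z1: "norm z < fps_conv_radius (fps_deriv f)"
    using z fps_conv_radius_deriv[of f] by (rule less_le_trans)
  have z2: "norm z < fps_conv_radius (fps_deriv (fps_deriv f))"
    using z1 fps_conv_radius_deriv[of "fps_deriv f"] by (rule less_le_trans)
  have p: "norm z < fps_conv_radius (fps_of_poly p * g)" if "norm z < fps_conv_radius g" for p g
    using that fps_conv_radius_mult[of "fps_of_poly p" g] by (simp add: min_def)
  have s: "norm z < fps_conv_radius (g + h)"
    if "norm z < fps_conv_radius g" "norm z < fps_conv_radius h" for g h :: "real fps"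
    using that fps_conv_radius_add[of g h] by (simp add: min_def split: if_splits)
  have "0 = eval_fps (fps_of_poly p2 * fps_deriv (fps_deriv f) + fps_of_poly p1 * fps_deriv f
                  + fps_of_poly p0 * f) z"
    by (simp add: ode)
  also have "\<dots> = poly p2 z * eval_fps (fps_deriv (fps_deriv f)) z + poly p1 z * eval_fps (fps_deriv f) z
           + poly p0 z * eval_fps f z"
    using z z1 z2 by (simp only: eval_fps_add p s eval_fps_of_poly_mult)
  finally show ?thesis ..
qed

lemma hypergeom_fps_ode:
  "fps_of_poly [:0, 1, -1:] * fps_deriv (fps_deriv (hypergeom_fps a))
     + fps_of_poly [:1, -(2*a+1):] * fps_deriv (hypergeom_fps a)
     + fps_of_poly [:-(a\<^sup>2):] * hypergeom_fps a = 0"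
proof -
  have polys: "fps_of_poly [:0, 1, -1:] = fps_X - (fps_X^2 :: real fps)"
    "fps_of_poly [:1, -(2*a+1):] = 1 - fps_const (2*a+1) * fps_X"
    "fps_of_poly [:-(a\<^sup>2):] = - fps_const (a\<^sup>2)"
    by (simp_all add: fps_of_poly_pCons power2_eq_square algebra_simps fps_const_neg)
  have "fps_X * fps_deriv (fps_deriv (hypergeom_fps a)) - fps_X^2 * fps_deriv (fps_deriv (hypergeom_fps a))
     + fps_deriv (hypergeom_fps a) - fps_const (2*a+1) * (fps_X * fps_deriv (hypergeom_fps a))
     - fps_const (a\<^sup>2) * hypergeom_fps a = 0"
  proof (rule fps_ext)
    fix k :: nat
    have "of_nat (Suc k) * ((-a) gchoose Suc k) = - ((-a) gchoose k) * (of_nat k + a)"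
      using gbinomial_Suc_rec[of "-a" k] by (simp add: field_simps)
    then have "(of_nat (Suc k) * ((-a) gchoose Suc k))\<^sup>2 = (((-a) gchoose k) * (of_nat k + a))\<^sup>2"
      by (simp add: power2_eq_square)
    then have rec: "of_nat (Suc k)^2 * ((-a) gchoose Suc k)\<^sup>2 = (of_nat k + a)^2 * ((-a) gchoose k)\<^sup>2"
      by (simp add: power_mult_distrib mult_ac)
    show "fps_nth (fps_X * fps_deriv (fps_deriv (hypergeom_fps a)) - fps_X^2 * fps_deriv (fps_deriv (hypergeom_fps a))
     + fps_deriv (hypergeom_fps a) - fps_const (2*a+1) * (fps_X * fps_deriv (hypergeom_fps a))
     - fps_const (a\<^sup>2) * hypergeom_fps a) k = fps_nth 0 k"
    proof (cases k)
      case 0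
      then show ?thesis using rec by (simp add: hypergeom_fps_def fps_X_power_mult_nth power2_eq_square)
    next
      case (Suc m)
      then show ?thesis using rec
        by (cases m) (simp_all add: hypergeom_fps_def fps_X_power_mult_nth power2_eq_square algebra_simps)
    qed
  qed
  then show ?thesis unfolding polys by (simp del: fps_const_neg add: algebra_simps)
qed

lemma bessel_fps_ode:
  "fps_of_poly [:0, 1:] * fps_deriv (fps_deriv (bessel_fps m))
     + fps_of_poly [:1:] * fps_deriv (bessel_fps m) + fps_of_poly [:-m:] * bessel_fps m = 0"
proof -
  have polys: "fps_of_poly [:0, 1:] = (fps_X :: real fps)" "fps_of_poly [:-m:] = - fps_const m"
    by (simp_all add: fps_of_poly_pCons)
  have "fps_X * fps_deriv (fps_deriv (bessel_fps m)) + fps_deriv (bessel_fps m)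
          - fps_const m * bessel_fps m = 0"
  proof (rule fps_ext)
    fix k :: nat
    define b where "b = (\<lambda>k. m ^ k / (fact k)\<^sup>2)"
    have "(fact (Suc k) :: real)\<^sup>2 = (of_nat (Suc k))\<^sup>2 * (fact k)\<^sup>2"
      by (simp only: fact_Suc of_nat_mult power_mult_distrib)
    then have rec: "(of_nat (Suc k))\<^sup>2 * b (Suc k) = m * b k"
      by (simp add: b_def del: of_nat_Suc)
    have "bessel_fps m = Abs_fps b" by (simp add: bessel_fps_def b_def)
    then show "fps_nth (fps_X * fps_deriv (fps_deriv (bessel_fps m)) + fps_deriv (bessel_fps m)
            - fps_const m * bessel_fps m) k = fps_nth 0 k"
      using rec by (cases k) (simp_all add: power2_eq_square algebra_simps)
  qed
  then show ?thesis unfolding polys by (simp del: fps_const_neg add: algebra_simps)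
qed

lemma fps_conv_radius_hypergeom_fps:
  assumes "a > 0"
  shows "fps_conv_radius (hypergeom_fps a) = 1"
proof -
  have "-a \<notin> \<nat>" using assms by (auto elim!: Nats_cases)
  then have "(\<lambda>k. ((-a) gchoose k) / ((-a) gchoose Suc k)) \<longlonglongrightarrow> -1"
    by (rule gbinomial_ratio_limit)
  then have "(\<lambda>k. (((-a) gchoose k) / ((-a) gchoose Suc k))\<^sup>2) \<longlonglongrightarrow> (-1)\<^sup>2"
    by (intro tendsto_intros)
  then have "(\<lambda>k. norm (((-a) gchoose k)\<^sup>2) / norm (((-a) gchoose Suc k)\<^sup>2)) \<longlonglongrightarrow> 1"
    by (simp add: power_divide)
  then have "conv_radius (\<lambda>k. ((-a) gchoose k)\<^sup>2) = 1"
    by (intro conv_radius_ratio_limit_nonzero[of _ 1]) simp_all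
  then show ?thesis by (simp add: fps_conv_radius_def hypergeom_fps_def)
qed

lemma fps_conv_radius_hypergeom_fps_nonpos_int:
  "fps_conv_radius (hypergeom_fps (- of_nat l)) = \<infinity>"
proof -
  have "eventually (\<lambda>k. ((of_nat l :: real) gchoose k)\<^sup>2 = 0) sequentially"
    using eventually_gt_at_top[of l] by eventually_elim (simp add: binomial_gbinomial[symmetric])
  then have "conv_radius (\<lambda>k. ((of_nat l :: real) gchoose k)\<^sup>2) = conv_radius (\<lambda>_. 0 :: real)"
    by (rule conv_radius_cong')
  then show ?thesis by (simp add: fps_conv_radius_def hypergeom_fps_def)
qed

lemma fps_conv_radius_bessel_fps: "fps_conv_radius (bessel_fps m) = \<infinity>"
proof -
  have "conv_radius (\<lambda>k. m ^ k / (fact k)\<^sup>2) = \<infinity>"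
  proof (rule conv_radius_inftyI'')
    fix z :: real
    show "summable (\<lambda>k. m ^ k / (fact k)\<^sup>2 * z ^ k)"
    proof (rule summable_comparison_test'[where N = 0])
      show "summable (\<lambda>k. inverse (fact k) * (\<bar>m\<bar> * \<bar>z\<bar>) ^ k)" by (rule summable_exp)
      fix k :: nat
      have "norm (m ^ k / (fact k)\<^sup>2 * z ^ k) = (\<bar>m\<bar> * \<bar>z\<bar>) ^ k / (fact k)\<^sup>2"
        by (simp add: abs_mult power_abs power_mult_distrib)
      also have "\<dots> \<le> (\<bar>m\<bar> * \<bar>z\<bar>) ^ k / fact k"
        by (intro divide_left_mono) (auto simp: power2_eq_square)
      finally show "norm (m ^ k / (fact k)\<^sup>2 * z ^ k) \<le> inverse (fact k) * (\<bar>m\<bar> * \<bar>z\<bar>) ^ k"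
        by (simp add: field_simps)
    qed
  qed
  then show ?thesis by (simp add: fps_conv_radius_def bessel_fps_def)
qed

lemma eval_fps_ge_nth_0:
  fixes f :: "real fps"
  assumes "\<And>k. fps_nth f k \<ge> 0" "z \<ge> 0" "norm z < fps_conv_radius f"
  shows "eval_fps f z \<ge> fps_nth f 0"
proof -
  have "(\<Sum>k\<in>{0}. fps_nth f k * z ^ k) \<le> (\<Sum>k. fps_nth f k * z ^ k)"
    using assms by (intro sum_le_suminf summable_fps) auto
  then show ?thesis by (simp add: eval_fps_def)
qed

section \<open>Closed forms of \<open>S\<^sub>n\<^sub>,\<^sub>c\<close>\<close>

lemma DERIV_mult_comp_second:
  fixes \<sigma> \<sigma>1 \<sigma>2 \<zeta> \<zeta>1 \<zeta>2 F F1 F2 :: "real \<Rightarrow> real"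
  assumes d\<sigma>: "(\<sigma> has_real_derivative \<sigma>1 x) (at x)" "(\<sigma>1 has_real_derivative \<sigma>2 x) (at x)"
    and d\<zeta>: "(\<zeta> has_real_derivative \<zeta>1 x) (at x)" "(\<zeta>1 has_real_derivative \<zeta>2 x) (at x)"
    and dF: "(F has_real_derivative F1 (\<zeta> x)) (at (\<zeta> x))" "(F1 has_real_derivative F2 (\<zeta> x)) (at (\<zeta> x))"
  shows "((\<lambda>y. \<sigma> y * F (\<zeta> y)) has_real_derivative \<sigma>1 x * F (\<zeta> x) + \<sigma> x * \<zeta>1 x * F1 (\<zeta> x)) (at x)"
    and "((\<lambda>y. \<sigma>1 y * F (\<zeta> y) + \<sigma> y * \<zeta>1 y * F1 (\<zeta> y)) has_real_derivative
           \<sigma>2 x * F (\<zeta> x) + 2 * \<sigma>1 x * \<zeta>1 x * F1 (\<zeta> x) + \<sigma> x * \<zeta>2 x * F1 (\<zeta> x)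
           + \<sigma> x * (\<zeta>1 x)\<^sup>2 * F2 (\<zeta> x)) (at x)"
    and "isCont \<sigma>2 x \<Longrightarrow> isCont \<zeta>2 x \<Longrightarrow> isCont F2 (\<zeta> x) \<Longrightarrow>
         isCont (\<lambda>y. \<sigma>2 y * F (\<zeta> y) + 2 * \<sigma>1 y * \<zeta>1 y * F1 (\<zeta> y) + \<sigma> y * \<zeta>2 y * F1 (\<zeta> y)
                    + \<sigma> y * (\<zeta>1 y)\<^sup>2 * F2 (\<zeta> y)) x"
proof -
  have dF\<zeta>: "((\<lambda>y. F (\<zeta> y)) has_real_derivative F1 (\<zeta> x) * \<zeta>1 x) (at x)"
    "((\<lambda>y. F1 (\<zeta> y)) has_real_derivative F2 (\<zeta> x) * \<zeta>1 x) (at x)"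
    using DERIV_chain2[OF dF(1) d\<zeta>(1)] DERIV_chain2[OF dF(2) d\<zeta>(1)] .
  show "((\<lambda>y. \<sigma> y * F (\<zeta> y)) has_real_derivative \<sigma>1 x * F (\<zeta> x) + \<sigma> x * \<zeta>1 x * F1 (\<zeta> x)) (at x)"
    by (rule DERIV_cong[OF DERIV_mult[OF d\<sigma>(1) dF\<zeta>(1)]]) (simp add: algebra_simps)
  show "((\<lambda>y. \<sigma>1 y * F (\<zeta> y) + \<sigma> y * \<zeta>1 y * F1 (\<zeta> y)) has_real_derivative
           \<sigma>2 x * F (\<zeta> x) + 2 * \<sigma>1 x * \<zeta>1 x * F1 (\<zeta> x) + \<sigma> x * \<zeta>2 x * F1 (\<zeta> x)
           + \<sigma> x * (\<zeta>1 x)\<^sup>2 * F2 (\<zeta> x)) (at x)"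
    by (rule DERIV_cong[OF DERIV_add[OF DERIV_mult[OF d\<sigma>(2) dF\<zeta>(1)]
                                        DERIV_mult[OF DERIV_mult[OF d\<sigma>(1) d\<zeta>(2)] dF\<zeta>(2)]]])
       (simp add: algebra_simps power2_eq_square)
  assume "isCont \<sigma>2 x" "isCont \<zeta>2 x" "isCont F2 (\<zeta> x)"
  moreover have "isCont \<sigma> x" "isCont \<sigma>1 x" "isCont \<zeta>1 x" "isCont (\<lambda>y. F (\<zeta> y)) x" "isCont (\<lambda>y. F1 (\<zeta> y)) x"
    using d\<sigma> d\<zeta> dF\<zeta> by (auto intro: DERIV_isCont)
  moreover have "isCont (\<lambda>y. F2 (\<zeta> y)) x"
    using \<open>isCont F2 (\<zeta> x)\<close> DERIV_isCont[OF d\<zeta>(1)] by (rule isCont_o2[rotated])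
  ultimately show "isCont (\<lambda>y. \<sigma>2 y * F (\<zeta> y) + 2 * \<sigma>1 y * \<zeta>1 y * F1 (\<zeta> y) + \<sigma> y * \<zeta>2 y * F1 (\<zeta> y)
                    + \<sigma> y * (\<zeta>1 y)\<^sup>2 * F2 (\<zeta> y)) x"
    by (intro continuous_intros) auto
qed

lemma Snc_eq_hypergeom:
  fixes c n x :: real
  assumes "c \<noteq> 0" "1 + c * x > 0"
    and "norm ((c * x / (1 + c * x))\<^sup>2) < fps_conv_radius (hypergeom_fps (n / c))"
  shows "Snc c n x = (1 + c * x) powr (- 2 * (n / c)) * eval_fps (hypergeom_fps (n / c)) ((c * x / (1 + c * x))\<^sup>2)"
proof -
  define a where "a = n / c"
  define z where "z = (c * x / (1 + c * x))\<^sup>2"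
  have "(\<lambda>k. fps_nth (hypergeom_fps a) k * z ^ k) sums eval_fps (hypergeom_fps a) z"
    using assms(3) by (intro sums_eval_fps) (simp add: a_def z_def)
  then have sums: "(\<lambda>k. (1 + c * x) powr (- 2 * a) * (fps_nth (hypergeom_fps a) k * z ^ k))
                     sums ((1 + c * x) powr (- 2 * a) * eval_fps (hypergeom_fps a) z)"
    by (rule sums_mult)
  have "(pnk c n k x)\<^sup>2 = (1 + c * x) powr (- 2 * a) * (fps_nth (hypergeom_fps a) k * z ^ k)" for k
  proof -
    have p: "pnk c n k x = (-1) ^ k * ((-a) gchoose k) * (c * x) ^ k * (1 + c * x) powr (- a - real k)"
      using assms by (simp add: pnk_def rpow_def a_def)
    have "((1 + c * x) powr (- a - real k))\<^sup>2 = (1 + c * x) powr (- 2 * a - real (2 * k))"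
      using assms(2) by (subst powr_power) (auto simp: algebra_simps)
    also have "\<dots> = (1 + c * x) powr (- 2 * a) / (1 + c * x) ^ (2 * k)"
      using assms(2) powr_realpow[of "1 + c * x" "2 * k"] by (simp add: powr_diff)
    finally have q: "((1 + c * x) powr (- a - real k))\<^sup>2 = (1 + c * x) powr (- 2 * a) / (1 + c * x) ^ (2 * k)" .
    have zk: "((c * x) ^ k)\<^sup>2 / (1 + c * x) ^ (2 * k) = z ^ k"
      unfolding z_def by (simp add: power_divide flip: power_mult) (simp add: mult.commute)
    have "((-1::real) ^ k)\<^sup>2 = 1" by (induct k) (auto simp: power2_eq_square)
    then have "(pnk c n k x)\<^sup>2 = ((-a) gchoose k)\<^sup>2 * ((c * x) ^ k)\<^sup>2 * ((1 + c * x) powr (- a - real k))\<^sup>2"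
      unfolding p by (simp add: power_mult_distrib)
    also have "\<dots> = (1 + c * x) powr (- 2 * a) * (((-a) gchoose k)\<^sup>2 * (((c * x) ^ k)\<^sup>2 / (1 + c * x) ^ (2 * k)))"
      unfolding q by simp
    also have "\<dots> = (1 + c * x) powr (- 2 * a) * (fps_nth (hypergeom_fps a) k * z ^ k)"
      unfolding zk by (simp add: hypergeom_fps_def)
    finally show ?thesis .
  qed
  with sums show ?thesis unfolding Snc_def by (simp add: sums_iff a_def z_def)
qed

lemma Snc_eq_bessel: "Snc 0 n x = exp (- 2 * n * x) * eval_fps (bessel_fps (n\<^sup>2)) (x\<^sup>2)"
proof -
  have "(\<lambda>k. exp (- 2 * n * x) * (fps_nth (bessel_fps (n\<^sup>2)) k * (x\<^sup>2) ^ k))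
          sums (exp (- 2 * n * x) * eval_fps (bessel_fps (n\<^sup>2)) (x\<^sup>2))"
    by (intro sums_mult sums_eval_fps) (simp add: fps_conv_radius_bessel_fps)
  moreover have "(pnk 0 n k x)\<^sup>2 = exp (- 2 * n * x) * (fps_nth (bessel_fps (n\<^sup>2)) k * (x\<^sup>2) ^ k)" for k
  proof -
    have "exp (- 2 * n * x) = (exp (- n * x))\<^sup>2" by (simp add: power2_eq_square flip: exp_add)
    then show ?thesis
      by (simp add: pnk_def bessel_fps_def power_mult_distrib power_divide mult.commute flip: power_mult)
  qed
  ultimately show ?thesis unfolding Snc_def by (simp add: sums_iff)
qed

text \<open>The left-hand side is the linear equation applied to \<open>\<sigma>(x) F(\<zeta>(x))\<close> with
  \<open>\<sigma>(x) = (1 + c x) powr (-2a)\<close> and \<open>\<zeta>(x) = (c x / (1 + c x))\<^sup>2\<close>, expanded by the chain rule.\<close>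

lemma hypergeom_substitution_identity:
  fixes a c x \<sigma> F F1 F2 :: real
  assumes "1 + c * x \<noteq> 0"
  defines "s \<equiv> 1 + c * x"
  shows "ode_P c x * (2 * a * (2 * a + 1) * c\<^sup>2 / s\<^sup>2 * \<sigma> * F
            + 2 * (- 2 * a * c / s * \<sigma>) * (2 * c\<^sup>2 * x / s ^ 3) * F1
            + \<sigma> * (2 * c\<^sup>2 * (1 - 2 * c * x) / s ^ 4) * F1 + \<sigma> * (2 * c\<^sup>2 * x / s ^ 3)\<^sup>2 * F2)
         + ode_Q c (a * c) x * (- 2 * a * c / s * \<sigma> * F + \<sigma> * (2 * c\<^sup>2 * x / s ^ 3) * F1)
         + ode_R c (a * c) x * (\<sigma> * F)
       = \<sigma> * (4 * c\<^sup>2 * x / s) * ((c * x / s)\<^sup>2 * (1 - (c * x / s)\<^sup>2) * F2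
            + (1 - (2 * a + 1) * (c * x / s)\<^sup>2) * F1 - a\<^sup>2 * F)"
proof -
  define t where "t = inverse s"
  have "s * t = 1" "s = 1 + c * x" using assms by (simp_all add: s_def t_def)
  then show ?thesis
    unfolding ode_P_def ode_Q_def ode_R_def divide_inverse power_inverse[symmetric] t_def[symmetric]
    by algebra
qed

lemma DERIV_eval_fps_second:
  fixes f :: "real fps"
  assumes "norm z < fps_conv_radius f"
  shows "(eval_fps f has_real_derivative eval_fps (fps_deriv f) z) (at z)"
    and "(eval_fps (fps_deriv f) has_real_derivative eval_fps (fps_deriv (fps_deriv f)) z) (at z)"
    and "isCont (eval_fps (fps_deriv (fps_deriv f))) z"
proof -
  have r1: "norm z < fps_conv_radius (fps_deriv f)"
    using assms fps_conv_radius_deriv[of f] by (rule less_le_trans)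
  have r2: "norm z < fps_conv_radius (fps_deriv (fps_deriv f))"
    using r1 fps_conv_radius_deriv[of "fps_deriv f"] by (rule less_le_trans)
  show "(eval_fps f has_real_derivative eval_fps (fps_deriv f) z) (at z)"
    "(eval_fps (fps_deriv f) has_real_derivative eval_fps (fps_deriv (fps_deriv f)) z) (at z)"
    using assms r1 by (auto intro: has_field_derivative_eval_fps)
  show "isCont (eval_fps (fps_deriv (fps_deriv f))) z"
    by (rule DERIV_isCont[OF has_field_derivative_eval_fps[OF r2]])
qed

lemma DERIV_powr_weight:
  fixes a c x :: real
  assumes "1 + c * x > 0"
  shows "((\<lambda>y. (1 + c * y) powr (- 2 * a)) has_real_derivative
           - 2 * a * c / (1 + c * x) * (1 + c * x) powr (- 2 * a)) (at x)" (is ?d1)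
    and "((\<lambda>y. - 2 * a * c / (1 + c * y) * (1 + c * y) powr (- 2 * a)) has_real_derivative
           2 * a * (2 * a + 1) * c\<^sup>2 / (1 + c * x)\<^sup>2 * (1 + c * x) powr (- 2 * a)) (at x)"
proof -
  have "((\<lambda>y. (1 + c * y) powr (- 2 * a)) has_real_derivative
          (- 2 * a) * (1 + c * x) powr (- 2 * a - 1) * c) (at x)"
    using DERIV_fun_powr[of "\<lambda>y. 1 + c * y" c x "- 2 * a"] assms by (auto intro!: derivative_eq_intros)
  then show ?d1 using assms by (simp add: powr_diff mult_ac)
  have dq: "((\<lambda>y. - 2 * a * c / (1 + c * y)) has_real_derivative 2 * a * c\<^sup>2 / (1 + c * x)\<^sup>2) (at x)"
    using assms by (auto intro!: derivative_eq_intros simp: power2_eq_square)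
  have "2 * a * c\<^sup>2 / s\<^sup>2 * w + - 2 * a * c / s * w * (- 2 * a * c / s)
          = 2 * a * (2 * a + 1) * c\<^sup>2 / s\<^sup>2 * w" for s w :: real
    by (cases "s = 0") (simp_all add: field_simps power2_eq_square)
  then show "((\<lambda>y. - 2 * a * c / (1 + c * y) * (1 + c * y) powr (- 2 * a)) has_real_derivative
           2 * a * (2 * a + 1) * c\<^sup>2 / (1 + c * x)\<^sup>2 * (1 + c * x) powr (- 2 * a)) (at x)"
    by (intro DERIV_cong[OF DERIV_mult[OF dq \<open>?d1\<close>]]) simp
qed

lemma DERIV_hypergeom_argument:
  fixes c x :: real
  assumes "1 + c * x \<noteq> 0"
  shows "((\<lambda>y. (c * y / (1 + c * y))\<^sup>2) has_real_derivative 2 * c\<^sup>2 * x / (1 + c * x) ^ 3) (at x)"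
    and "((\<lambda>y. 2 * c\<^sup>2 * y / (1 + c * y) ^ 3) has_real_derivative
           2 * c\<^sup>2 * (1 - 2 * c * x) / (1 + c * x) ^ 4) (at x)"
proof -
  have "((\<lambda>y. c * y / (1 + c * y)) has_real_derivative c / (1 + c * x)\<^sup>2) (at x)"
    using assms by (auto intro!: derivative_eq_intros simp: power2_eq_square field_simps)
  from DERIV_power[OF this, of 2]
  show "((\<lambda>y. (c * y / (1 + c * y))\<^sup>2) has_real_derivative 2 * c\<^sup>2 * x / (1 + c * x) ^ 3) (at x)"
    using assms by (simp add: field_simps power2_eq_square power3_eq_cube)
  show "((\<lambda>y. 2 * c\<^sup>2 * y / (1 + c * y) ^ 3) has_real_derivative
           2 * c\<^sup>2 * (1 - 2 * c * x) / (1 + c * x) ^ 4) (at x)"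
    using assms by (auto intro!: derivative_eq_intros simp: field_simps) (simp add: eval_nat_numeral algebra_simps)
qed

lemma hypergeom_ode_solution:
  fixes c n :: real and U :: "real set"
  assumes "c \<noteq> 0"
    and U: "\<And>x. x \<in> U \<Longrightarrow> 1 + c * x > 0 \<and>
              norm ((c * x / (1 + c * x))\<^sup>2) < fps_conv_radius (hypergeom_fps (n / c))"
  obtains S S1 S2 :: "real \<Rightarrow> real" where
    "\<And>x. x \<in> U \<Longrightarrow> Snc c n x = S x"
    "\<And>x. x \<in> U \<Longrightarrow> (S has_real_derivative S1 x) (at x)"
    "\<And>x. x \<in> U \<Longrightarrow> (S1 has_real_derivative S2 x) (at x)"
    "\<And>x. x \<in> U \<Longrightarrow> isCont S2 x"
    "\<And>x. x \<in> U \<Longrightarrow> S x > 0"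
    "\<And>x. x \<in> U \<Longrightarrow> ode_P c x * S2 x + ode_Q c n x * S1 x + ode_R c n x * S x = 0"
    "S 0 = 1" "S1 0 = - 2 * n" "S2 0 = 6 * n\<^sup>2 + 2 * n * c"
proof -
  define a where "a = n / c"
  have n: "n = a * c" using \<open>c \<noteq> 0\<close> by (simp add: a_def)
  define f where "f = hypergeom_fps a"
  define \<sigma> where "\<sigma> y = (1 + c * y) powr (- 2 * a)" for y
  define \<sigma>1 where "\<sigma>1 y = - 2 * a * c / (1 + c * y) * \<sigma> y" for y
  define \<sigma>2 where "\<sigma>2 y = 2 * a * (2 * a + 1) * c\<^sup>2 / (1 + c * y)\<^sup>2 * \<sigma> y" for y
  define \<zeta> where "\<zeta> y = (c * y / (1 + c * y))\<^sup>2" for y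
  define \<zeta>1 where "\<zeta>1 y = 2 * c\<^sup>2 * y / (1 + c * y) ^ 3" for y
  define \<zeta>2 where "\<zeta>2 y = 2 * c\<^sup>2 * (1 - 2 * c * y) / (1 + c * y) ^ 4" for y
  define F where "F = eval_fps f"
  define F1 where "F1 = eval_fps (fps_deriv f)"
  define F2 where "F2 = eval_fps (fps_deriv (fps_deriv f))"
  define S where "S y = \<sigma> y * F (\<zeta> y)" for y
  define S1 where "S1 y = \<sigma>1 y * F (\<zeta> y) + \<sigma> y * \<zeta>1 y * F1 (\<zeta> y)" for y
  define S2 where "S2 y = \<sigma>2 y * F (\<zeta> y) + 2 * \<sigma>1 y * \<zeta>1 y * F1 (\<zeta> y) + \<sigma> y * \<zeta>2 y * F1 (\<zeta> y)
                          + \<sigma> y * (\<zeta>1 y)\<^sup>2 * F2 (\<zeta> y)" for y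
  have local_facts: "(S has_real_derivative S1 x) (at x) \<and> (S1 has_real_derivative S2 x) (at x)
      \<and> isCont S2 x \<and> S x > 0 \<and> ode_P c x * S2 x + ode_Q c n x * S1 x + ode_R c n x * S x = 0"
    if "x \<in> U" for x
  proof -
    have "1 + c * x > 0" and r0: "norm (\<zeta> x) < fps_conv_radius f"
      using U[OF that] by (simp_all add: \<zeta>_def f_def a_def)
    then have "1 + c * x \<noteq> 0" by simp
    have d\<sigma>: "(\<sigma> has_real_derivative \<sigma>1 x) (at x)" "(\<sigma>1 has_real_derivative \<sigma>2 x) (at x)"
      unfolding \<sigma>1_def[abs_def] \<sigma>_def[abs_def] \<sigma>2_def using DERIV_powr_weight[OF \<open>1 + c * x > 0\<close>] by auto
    have d\<zeta>: "(\<zeta> has_real_derivative \<zeta>1 x) (at x)" "(\<zeta>1 has_real_derivative \<zeta>2 x) (at x)"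
      unfolding \<zeta>_def[abs_def] \<zeta>1_def[abs_def] \<zeta>2_def
      using DERIV_hypergeom_argument[OF \<open>1 + c * x \<noteq> 0\<close>] by auto
    note dF = DERIV_eval_fps_second[OF r0, folded F_def F1_def F2_def]
    note d = DERIV_mult_comp_second[where \<sigma> = \<sigma> and ?\<sigma>1.0 = \<sigma>1 and ?\<sigma>2.0 = \<sigma>2 and \<zeta> = \<zeta>
               and ?\<zeta>1.0 = \<zeta>1 and ?\<zeta>2.0 = \<zeta>2 and F = F and ?F1.0 = F1 and ?F2.0 = F2,
               OF d\<sigma> d\<zeta> dF(1,2)]
    have ode_f: "\<zeta> x * (1 - \<zeta> x) * F2 (\<zeta> x) + (1 - (2 * a + 1) * \<zeta> x) * F1 (\<zeta> x) - a\<^sup>2 * F (\<zeta> x) = 0"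
      using eval_fps_second_order_ode[OF hypergeom_fps_ode r0[unfolded f_def]]
      by (simp add: F_def F1_def F2_def f_def algebra_simps)
    have "ode_P c x * S2 x + ode_Q c n x * S1 x + ode_R c n x * S x
           = \<sigma> x * (4 * c\<^sup>2 * x / (1 + c * x)) * (\<zeta> x * (1 - \<zeta> x) * F2 (\<zeta> x)
               + (1 - (2 * a + 1) * \<zeta> x) * F1 (\<zeta> x) - a\<^sup>2 * F (\<zeta> x))"
      using hypergeom_substitution_identity[OF \<open>1 + c * x \<noteq> 0\<close>, of a "\<sigma> x"] unfolding n
      by (simp add: S_def S1_def S2_def \<sigma>1_def \<sigma>2_def \<zeta>_def \<zeta>1_def \<zeta>2_def)
    also have "\<dots> = 0" by (simp add: ode_f)
    finally have ode: "ode_P c x * S2 x + ode_Q c n x * S1 x + ode_R c n x * S x = 0" .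
    have "F (\<zeta> x) \<ge> 1"
      using eval_fps_ge_nth_0[of f "\<zeta> x"] r0 by (simp add: F_def f_def hypergeom_fps_def \<zeta>_def)
    moreover have "\<sigma> x > 0" using \<open>1 + c * x > 0\<close> by (simp add: \<sigma>_def)
    ultimately have "S x > 0" by (simp add: S_def)
    moreover have "isCont \<sigma>2 x" "isCont \<zeta>2 x"
      using \<open>1 + c * x \<noteq> 0\<close> DERIV_isCont[OF d\<sigma>(1)] unfolding \<sigma>2_def \<zeta>2_def
      by (auto intro!: continuous_intros)
    ultimately show ?thesis
      using d(1,2) d(3)[OF _ _ dF(3)] ode unfolding S_def[abs_def] S1_def[abs_def] S2_def[abs_def] by blast
  qed
  have f0: "F 0 = 1" "F1 0 = a\<^sup>2"
    by (simp_all add: F_def F1_def eval_fps_at_0 f_def hypergeom_fps_def)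
  show ?thesis
  proof (rule that[of S S1 S2])
    show "Snc c n x = S x" if "x \<in> U" for x
      using Snc_eq_hypergeom[OF \<open>c \<noteq> 0\<close>] U[OF that]
      by (simp add: S_def \<sigma>_def \<zeta>_def F_def f_def a_def)
    show "S 0 = 1" "S1 0 = - 2 * n" "S2 0 = 6 * n\<^sup>2 + 2 * n * c"
      using f0 by (simp_all add: S_def S1_def S2_def \<sigma>_def \<sigma>1_def \<sigma>2_def \<zeta>_def \<zeta>1_def \<zeta>2_def n
                                  algebra_simps power2_eq_square)
  qed (use local_facts in blast)+
qed

lemma bessel_ode_solution:
  fixes n :: real
  obtains S S1 S2 :: "real \<Rightarrow> real" where
    "\<And>x. Snc 0 n x = S x"
    "\<And>x. (S has_real_derivative S1 x) (at x)"
    "\<And>x. (S1 has_real_derivative S2 x) (at x)"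
    "\<And>x. isCont S2 x"
    "\<And>x. S x > 0"
    "\<And>x. ode_P 0 x * S2 x + ode_Q 0 n x * S1 x + ode_R 0 n x * S x = 0"
    "S 0 = 1" "S1 0 = - 2 * n" "S2 0 = 6 * n\<^sup>2"
proof -
  define f where "f = bessel_fps (n\<^sup>2)"
  define \<sigma> where "\<sigma> y = exp (- 2 * n * y)" for y
  define \<sigma>1 where "\<sigma>1 y = - 2 * n * \<sigma> y" for y
  define \<sigma>2 where "\<sigma>2 y = 4 * n\<^sup>2 * \<sigma> y" for y
  define \<zeta> where "\<zeta> y = y\<^sup>2" for y :: real
  define \<zeta>1 where "\<zeta>1 y = 2 * y" for y :: real
  define \<zeta>2 where "\<zeta>2 (y :: real) = (2 :: real)" for y
  define F where "F = eval_fps f"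
  define F1 where "F1 = eval_fps (fps_deriv f)"
  define F2 where "F2 = eval_fps (fps_deriv (fps_deriv f))"
  define S where "S y = \<sigma> y * F (\<zeta> y)" for y
  define S1 where "S1 y = \<sigma>1 y * F (\<zeta> y) + \<sigma> y * \<zeta>1 y * F1 (\<zeta> y)" for y
  define S2 where "S2 y = \<sigma>2 y * F (\<zeta> y) + 2 * \<sigma>1 y * \<zeta>1 y * F1 (\<zeta> y) + \<sigma> y * \<zeta>2 y * F1 (\<zeta> y)
                          + \<sigma> y * (\<zeta>1 y)\<^sup>2 * F2 (\<zeta> y)" for y
  have r: "norm z < fps_conv_radius f" for z :: real
    by (simp add: f_def fps_conv_radius_bessel_fps)
  have local_facts: "(S has_real_derivative S1 x) (at x) \<and> (S1 has_real_derivative S2 x) (at x)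
      \<and> isCont S2 x \<and> S x > 0 \<and> ode_P 0 x * S2 x + ode_Q 0 n x * S1 x + ode_R 0 n x * S x = 0" for x
  proof -
    have d\<sigma>: "(\<sigma> has_real_derivative \<sigma>1 x) (at x)" "(\<sigma>1 has_real_derivative \<sigma>2 x) (at x)"
      unfolding \<sigma>1_def[abs_def] \<sigma>_def[abs_def]
      by (auto intro!: derivative_eq_intros simp: \<sigma>2_def \<sigma>_def power2_eq_square)
    have d\<zeta>: "(\<zeta> has_real_derivative \<zeta>1 x) (at x)" "(\<zeta>1 has_real_derivative \<zeta>2 x) (at x)"
      unfolding \<zeta>_def[abs_def] \<zeta>1_def[abs_def] by (auto intro!: derivative_eq_intros simp: \<zeta>2_def)
    note dF = DERIV_eval_fps_second[OF r, folded F_def F1_def F2_def]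
    note d = DERIV_mult_comp_second[where \<sigma> = \<sigma> and ?\<sigma>1.0 = \<sigma>1 and ?\<sigma>2.0 = \<sigma>2 and \<zeta> = \<zeta>
               and ?\<zeta>1.0 = \<zeta>1 and ?\<zeta>2.0 = \<zeta>2 and F = F and ?F1.0 = F1 and ?F2.0 = F2,
               OF d\<sigma> d\<zeta> dF(1,2)]
    have ode_f: "\<zeta> x * F2 (\<zeta> x) + F1 (\<zeta> x) - n\<^sup>2 * F (\<zeta> x) = 0"
      using eval_fps_second_order_ode[OF bessel_fps_ode r[unfolded f_def]]
      by (simp add: F_def F1_def F2_def f_def)
    have "ode_P 0 x * S2 x + ode_Q 0 n x * S1 x + ode_R 0 n x * S x
           = \<sigma> x * (4 * x) * (\<zeta> x * F2 (\<zeta> x) + F1 (\<zeta> x) - n\<^sup>2 * F (\<zeta> x))"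
      by (simp add: ode_P_def ode_Q_def ode_R_def S_def S1_def S2_def \<sigma>1_def \<sigma>2_def \<zeta>_def \<zeta>1_def \<zeta>2_def
                    algebra_simps power2_eq_square)
    also have "\<dots> = 0" by (simp add: ode_f)
    finally have ode: "ode_P 0 x * S2 x + ode_Q 0 n x * S1 x + ode_R 0 n x * S x = 0" .
    have "F (\<zeta> x) \<ge> fps_nth f 0"
      unfolding F_def by (rule eval_fps_ge_nth_0) (use r[of "\<zeta> x"] in \<open>auto simp: f_def bessel_fps_def \<zeta>_def\<close>)
    then have "F (\<zeta> x) \<ge> 1" by (simp add: f_def bessel_fps_def)
    then have "S x > 0" by (simp add: S_def \<sigma>_def)
    moreover have "isCont \<sigma>2 x" "isCont \<zeta>2 x"
      unfolding \<sigma>2_def \<zeta>2_def \<sigma>_def by (auto intro!: continuous_intros)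
    ultimately show ?thesis
      using d(1,2) d(3)[OF _ _ dF(3)] ode unfolding S_def[abs_def] S1_def[abs_def] S2_def[abs_def] by blast
  qed
  have f0: "F 0 = 1" "F1 0 = n\<^sup>2"
    by (simp_all add: F_def F1_def eval_fps_at_0 f_def bessel_fps_def)
  show ?thesis
  proof (rule that[of S S1 S2])
    show "Snc 0 n x = S x" for x
      by (simp add: Snc_eq_bessel S_def \<sigma>_def \<zeta>_def F_def f_def)
    show "S 0 = 1" "S1 0 = - 2 * n" "S2 0 = 6 * n\<^sup>2"
      using f0 by (simp_all add: S_def S1_def S2_def \<sigma>_def \<sigma>1_def \<sigma>2_def \<zeta>_def \<zeta>1_def \<zeta>2_def)
  qed (use local_facts in blast)+
qed

lemma rpow_nat_diff:
  assumes "k \<le> l"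
  shows "rpow b (real l - real k) = b ^ (l - k)"
proof -
  have "real l - real k = real (l - k)" using assms by simp
  then show ?thesis unfolding rpow_def by (simp del: of_nat_diff add: powr_realpow)
qed

lemma Snc_eq_binomial_sum:
  assumes "c < 0" "n = - c * real l"
  shows "Snc c n x = (\<Sum>k\<le>l. (real (l choose k))\<^sup>2 * (c * x) ^ (2 * k) * (1 + c * x) ^ (2 * (l - k)))"
proof -
  have a: "- n / c = real l" using assms by (simp add: field_simps)
  have pk: "pnk c n k x = (if k \<le> l then (-1) ^ k * real (l choose k) * (c * x) ^ k * (1 + c * x) ^ (l - k) else 0)"
    for k
    using assms(1) unfolding pnk_def a by (simp add: rpow_nat_diff binomial_gbinomial[symmetric])
  have "Snc c n x = (\<Sum>k\<le>l. (pnk c n k x)\<^sup>2)"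
    unfolding Snc_def by (rule suminf_finite) (auto simp: pk)
  also have "\<dots> = (\<Sum>k\<le>l. (real (l choose k))\<^sup>2 * (c * x) ^ (2 * k) * (1 + c * x) ^ (2 * (l - k)))"
    by (intro sum.cong refl) (simp add: pk power_mult_distrib power_mult[symmetric] mult.commute)
  finally show ?thesis .
qed

locale Snc_ode_solution =
  fixes c n :: real and U :: "real set" and S S1 S2 :: "real \<Rightarrow> real"
  assumes open_U: "open U" and Icset_subset: "Icset c \<subseteq> U"
    and Snc_eq: "\<And>x. x \<in> U \<Longrightarrow> Snc c n x = S x"
    and S_deriv: "\<And>x. x \<in> U \<Longrightarrow> (S has_real_derivative S1 x) (at x)"
    and S1_deriv: "\<And>x. x \<in> U \<Longrightarrow> (S1 has_real_derivative S2 x) (at x)"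
    and S_pos: "\<And>x. x \<in> Icset c \<Longrightarrow> S x > 0"
    and ode: "\<And>x. x \<in> Icset c \<Longrightarrow> ode_P c x * S2 x + ode_Q c n x * S1 x + ode_R c n x * S x = 0"
begin

lemma Rnc_riccati:
  assumes "x \<in> Icset c"
  shows "(Rnc c n has_real_derivative - S1 x / S x) (at x)"
    and "((\<lambda>y. - S1 y / S y) has_real_derivative (S1 x / S x)\<^sup>2 - S2 x / S x) (at x)"
    and "ode_P c x * ((S1 x / S x)\<^sup>2 - S2 x / S x)
           = ode_P c x * (- S1 x / S x)\<^sup>2 - ode_Q c n x * (- S1 x / S x) + ode_R c n x"
proof -
  have "x \<in> U" using assms Icset_subset by blast
  have "S x > 0" using S_pos[OF assms] .
  then have "S x \<noteq> 0" by simp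
  note riccati = riccati_of_second_order_linear[where S = S and ?S1.0 = S1 and ?S2.0 = S2,
                   OF S_deriv[OF \<open>x \<in> U\<close>] S1_deriv[OF \<open>x \<in> U\<close>] \<open>S x \<noteq> 0\<close> ode[OF assms]]
  have "((\<lambda>y. - ln (S y)) has_real_derivative - S1 x / S x) (at x)"
    using \<open>S x > 0\<close> by (auto intro!: derivative_eq_intros S_deriv[OF \<open>x \<in> U\<close>] simp: field_simps)
  then show "(Rnc c n has_real_derivative - S1 x / S x) (at x)"
    by (rule has_field_derivative_transform_within_open[OF _ open_U \<open>x \<in> U\<close>])
       (simp add: Rnc_def Snc_eq)
  show "((\<lambda>y. - S1 y / S y) has_real_derivative (S1 x / S x)\<^sup>2 - S2 x / S x) (at x)"
    by (fact riccati(1))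
  show "ode_P c x * ((S1 x / S x)\<^sup>2 - S2 x / S x)
           = ode_P c x * (- S1 x / S x)\<^sup>2 - ode_Q c n x * (- S1 x / S x) + ode_R c n x"
    by (fact riccati(2))
qed

lemma Rnc_riccati_exists:
  "\<exists>u u' :: real \<Rightarrow> real. \<forall>x \<in> Icset c.
          (Rnc c n has_real_derivative u x) (at x within Icset c)
        \<and> (u has_real_derivative u' x) (at x within Icset c)
        \<and> x * (1 + c * x) * (1 + 2 * c * x) * u' x
            = x * (1 + c * x) * (1 + 2 * c * x) * (u x)\<^sup>2
              - (4 * (n + c) * x * (1 + c * x) + 1) * u x + 2 * n * (1 + 2 * c * x)"
proof (rule exI[of _ "\<lambda>y. - S1 y / S y"], rule exI[of _ "\<lambda>y. (S1 y / S y)\<^sup>2 - S2 y / S y"],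
       intro ballI conjI)
  fix x assume x: "x \<in> Icset c"
  show "(Rnc c n has_real_derivative - S1 x / S x) (at x within Icset c)"
    using Rnc_riccati(1)[OF x] by (rule has_field_derivative_at_within)
  show "((\<lambda>y. - S1 y / S y) has_real_derivative (S1 x / S x)\<^sup>2 - S2 x / S x) (at x within Icset c)"
    using Rnc_riccati(2)[OF x] by (rule has_field_derivative_at_within)
  show "x * (1 + c * x) * (1 + 2 * c * x) * ((S1 x / S x)\<^sup>2 - S2 x / S x)
          = x * (1 + c * x) * (1 + 2 * c * x) * (- S1 x / S x)\<^sup>2
            - (4 * (n + c) * x * (1 + c * x) + 1) * (- S1 x / S x) + 2 * n * (1 + 2 * c * x)"
    using Rnc_riccati(3)[OF x] by (simp only: ode_P_def ode_Q_def ode_R_def)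
qed

lemma Rnc_concave_strict_mono:
  assumes "c \<ge> 0" "n > c" and cont: "\<And>x. x \<ge> 0 \<Longrightarrow> isCont S2 x"
    and init: "S 0 = 1" "S1 0 = - 2 * n" "S2 0 = 6 * n\<^sup>2 + 2 * n * c"
  shows "concave_on {0..} (Rnc c n) \<and> strict_mono_on {0..} (Rnc c n)"
proof (rule concave_strict_mono_on_nonneg)
  define u where "u y = - S1 y / S y" for y
  define v where "v y = (S1 y / S y)\<^sup>2 - S2 y / S y" for y
  have I: "x \<in> Icset c" if "x \<ge> 0" for x using that \<open>c \<ge> 0\<close> by (simp add: Icset_def)
  have U: "x \<in> U" if "x \<ge> 0" for x using I[OF that] Icset_subset by blast
  show "(Rnc c n has_real_derivative u x) (at x)" if "x \<ge> 0" for x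
    using Rnc_riccati(1)[OF I[OF that]] by (simp add: u_def)
  show du: "(u has_real_derivative v x) (at x)" if "x \<ge> 0" for x
    using Rnc_riccati(2)[OF I[OF that]] by (simp add: u_def[abs_def] v_def)
  have cont_v: "isCont v x" if "x \<ge> 0" for x
    using DERIV_isCont[OF S_deriv[OF U[OF that]]] DERIV_isCont[OF S1_deriv[OF U[OF that]]]
      cont[OF that] S_pos[OF I[OF that]] unfolding v_def by (intro continuous_intros) auto
  have riccati: "ode_P c x * v x = ode_P c x * (u x)\<^sup>2 - ode_Q c n x * u x + ode_R c n x" if "x > 0" for x
    using Rnc_riccati(3)[OF I] that by (simp add: u_def v_def)
  have "u 0 = 2 * n" "v 0 = - 2 * n * (n + c)"
    using init by (simp_all add: u_def v_def power2_eq_square algebra_simps)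
  then show "u x > 0 \<and> v x < 0" if "x \<ge> 0" for x
    using riccati_solution_pos_decreasing[OF \<open>c \<ge> 0\<close> \<open>n > c\<close> du cont_v riccati _ _ that] by blast
qed

end

lemma Snc_ode_solution_nonneg:
  assumes "c \<ge> 0" "n > c"
  obtains U S S1 S2 where "Snc_ode_solution c n U S S1 S2" "\<And>x. x \<ge> 0 \<Longrightarrow> isCont S2 x"
    "S 0 = 1" "S1 0 = - 2 * n" "S2 0 = 6 * n\<^sup>2 + 2 * n * c"
proof (cases "c = 0")
  case True
  show ?thesis
  proof (rule bessel_ode_solution[of n])
    fix S S1 S2 :: "real \<Rightarrow> real"
    assume sol: "\<And>x. Snc 0 n x = S x" "\<And>x. (S has_real_derivative S1 x) (at x)"
      "\<And>x. (S1 has_real_derivative S2 x) (at x)" "\<And>x. isCont S2 x" "\<And>x. S x > 0"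
      "\<And>x. ode_P 0 x * S2 x + ode_Q 0 n x * S1 x + ode_R 0 n x * S x = 0"
      "S 0 = 1" "S1 0 = - 2 * n" "S2 0 = 6 * n\<^sup>2"
    have "Snc_ode_solution 0 n UNIV S S1 S2"
      by (intro Snc_ode_solution.intro open_UNIV subset_UNIV sol(1-3,5,6))
    with sol(4,7-9) True show ?thesis by (intro that[of UNIV S S1 S2]) simp_all
  qed
next
  case False
  then have "c > 0" using \<open>c \<ge> 0\<close> by simp
  define U where "U = {x. 1 + 2 * c * x > 0}"
  have rad: "fps_conv_radius (hypergeom_fps (n / c)) = 1"
    using \<open>c > 0\<close> \<open>n > c\<close> by (intro fps_conv_radius_hypergeom_fps) simp
  have inU: "1 + c * x > 0 \<and> norm ((c * x / (1 + c * x))\<^sup>2) < fps_conv_radius (hypergeom_fps (n / c))"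
    if "x \<in> U" for x
  proof -
    have "1 + 2 * c * x > 0" using that by (simp add: U_def)
    then have "1 + c * x > 0" "\<bar>c * x\<bar> < 1 + c * x" by (auto simp: abs_if)
    then have "\<bar>c * x / (1 + c * x)\<bar> < 1" by (simp add: abs_divide)
    then have "(c * x / (1 + c * x))\<^sup>2 < 1" by (simp add: abs_square_less_1)
    then show ?thesis using \<open>1 + c * x > 0\<close> rad by simp
  qed
  show ?thesis
  proof (rule hypergeom_ode_solution[of c U n, OF False inU])
    fix S S1 S2 :: "real \<Rightarrow> real"
    assume sol:
      "\<And>x. x \<in> U \<Longrightarrow> Snc c n x = S x" "\<And>x. x \<in> U \<Longrightarrow> (S has_real_derivative S1 x) (at x)"
      "\<And>x. x \<in> U \<Longrightarrow> (S1 has_real_derivative S2 x) (at x)" "\<And>x. x \<in> U \<Longrightarrow> isCont S2 x"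
      "\<And>x. x \<in> U \<Longrightarrow> S x > 0"
      "\<And>x. x \<in> U \<Longrightarrow> ode_P c x * S2 x + ode_Q c n x * S1 x + ode_R c n x * S x = 0"
      "S 0 = 1" "S1 0 = - 2 * n" "S2 0 = 6 * n\<^sup>2 + 2 * n * c"
    have U: "x \<in> U" if "x \<ge> 0" for x
      using that \<open>c > 0\<close> by (simp add: U_def add_pos_nonneg)
    then have "Icset c \<subseteq> U" using \<open>c > 0\<close> by (auto simp: Icset_def)
    have "Snc_ode_solution c n U S S1 S2"
    proof (intro Snc_ode_solution.intro \<open>Icset c \<subseteq> U\<close> sol(1-3))
      show "open U" unfolding U_def by (intro open_Collect_less continuous_intros)
      show "S x > 0" if "x \<in> Icset c" for x
        using sol(5) that \<open>Icset c \<subseteq> U\<close> by blast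
      show "ode_P c x * S2 x + ode_Q c n x * S1 x + ode_R c n x * S x = 0" if "x \<in> Icset c" for x
        using sol(6) that \<open>Icset c \<subseteq> U\<close> by blast
    qed
    then show ?thesis by (rule that[of U S S1 S2]) (use sol(4,7-9) U in simp_all)
  qed
qed

lemma Snc_ode_solution_neg:
  assumes "c < 0" "n = - c * real l"
  obtains U S S1 S2 where "Snc_ode_solution c n U S S1 S2"
proof -
  define p where "p = (\<Sum>k\<le>l. smult ((real (l choose k))\<^sup>2) ([:0, c:] ^ (2 * k) * [:1, c:] ^ (2 * (l - k))))"
  have "poly p x = (\<Sum>k\<le>l. (real (l choose k))\<^sup>2 * (c * x) ^ (2 * k) * (1 + c * x) ^ (2 * (l - k)))" for x
    unfolding p_def by (simp add: poly_sum poly_power mult_ac)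
  then have Snc_p: "Snc c n x = poly p x" for x
    using Snc_eq_binomial_sum[OF assms] by simp
  define V where "V = {x. 1 + c * x > 0}"
  have "open V" unfolding V_def by (intro open_Collect_less continuous_intros)
  have "n / c = - real l" using assms by (simp add: field_simps)
  then have inV: "1 + c * x > 0 \<and> norm ((c * x / (1 + c * x))\<^sup>2) < fps_conv_radius (hypergeom_fps (n / c))"
    if "x \<in> V" for x
    using that fps_conv_radius_hypergeom_fps_nonpos_int[of l] by (simp add: V_def)
  show ?thesis
  proof (rule hypergeom_ode_solution[of c V n, OF _ inV])
    show "c \<noteq> 0" using \<open>c < 0\<close> by simp
  next
    fix S S1 S2 :: "real \<Rightarrow> real"
    assume sol:
      "\<And>x. x \<in> V \<Longrightarrow> Snc c n x = S x" "\<And>x. x \<in> V \<Longrightarrow> (S has_real_derivative S1 x) (at x)"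
      "\<And>x. x \<in> V \<Longrightarrow> (S1 has_real_derivative S2 x) (at x)" "\<And>x. x \<in> V \<Longrightarrow> isCont S2 x"
      "\<And>x. x \<in> V \<Longrightarrow> S x > 0"
      "\<And>x. x \<in> V \<Longrightarrow> ode_P c x * S2 x + ode_Q c n x * S1 x + ode_R c n x * S x = 0"
      "S 0 = 1" "S1 0 = - 2 * n" "S2 0 = 6 * n\<^sup>2 + 2 * n * c"
    have p0: "poly p x = S x" if "x \<in> V" for x
      using sol(1)[OF that] Snc_p[of x] by simp
    have p1: "poly (pderiv p) x = S1 x" if "x \<in> V" for x
      using poly_DERIV sol(2)[OF that] \<open>open V\<close> that p0 by (rule DERIV_unique_on_open)
    have p2: "poly (pderiv (pderiv p)) x = S2 x" if "x \<in> V" for x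
      using poly_DERIV sol(3)[OF that] \<open>open V\<close> that p1 by (rule DERIV_unique_on_open)
    define E where "E x = ode_P c x * poly (pderiv (pderiv p)) x + ode_Q c n x * poly (pderiv p) x
                          + ode_R c n x * poly p x" for x
    have "{..<- 1 / c} \<subseteq> {x. E x = 0}"
    proof
      fix x assume "x \<in> {..<- 1 / c}"
      then have "x \<in> V" using \<open>c < 0\<close> by (simp add: V_def field_simps)
      then show "x \<in> {x. E x = 0}" using sol(6) p0 p1 p2 by (simp add: E_def)
    qed
    moreover have "closed {x. E x = 0}"
      unfolding E_def ode_P_def ode_Q_def ode_R_def by (intro closed_Collect_eq continuous_intros)
    ultimately have E0: "E x = 0" if "x \<le> - 1 / c" for x
      using closure_minimal[of "{..<- 1 / c}"] that by auto
    have pos: "poly p x > 0" if "x \<in> Icset c" for x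
    proof (cases "x \<in> V")
      case True
      then show ?thesis using sol(5) p0 by simp
    next
      case False
      then have "c * x = - 1" using that \<open>c < 0\<close> by (auto simp: V_def Icset_def field_simps)
      have "(real (l choose l))\<^sup>2 * (c * x) ^ (2 * l) * (1 + c * x) ^ (2 * (l - l)) \<le> poly p x"
        unfolding Snc_p[symmetric] Snc_eq_binomial_sum[OF assms]
        by (rule member_le_sum) (simp_all add: power_mult zero_le_mult_iff)
      then show ?thesis using \<open>c * x = - 1\<close> by (simp add: power_mult)
    qed
    have "Icset c \<subseteq> {..- 1 / c}" using \<open>c < 0\<close> by (auto simp: Icset_def)
    then have ode: "ode_P c x * poly (pderiv (pderiv p)) x + ode_Q c n x * poly (pderiv p) x
                      + ode_R c n x * poly p x = 0" if "x \<in> Icset c" for x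
      using E0[of x] that unfolding E_def by blast
    have "Snc_ode_solution c n UNIV (poly p) (poly (pderiv p)) (poly (pderiv (pderiv p)))"
      by (intro Snc_ode_solution.intro open_UNIV subset_UNIV Snc_p poly_DERIV pos ode)
    then show ?thesis by (rule that)
  qed
qed

theorem theorem4p1:
  fixes c n :: real
  assumes "n > 0"
    and "(c \<ge> 0 \<and> n > c) \<or> (c < 0 \<and> (\<exists>l::nat. n = - c * real l))"
  shows "(c \<ge> 0 \<longrightarrow> concave_on {0..} (Rnc c n) \<and> strict_mono_on {0..} (Rnc c n))
    \<and> (\<exists>u u' :: real \<Rightarrow> real. \<forall>x \<in> Icset c.
          (Rnc c n has_real_derivative u x) (at x within Icset c)
        \<and> (u has_real_derivative u' x) (at x within Icset c)
        \<and> x * (1 + c * x) * (1 + 2 * c * x) * u' x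
            = x * (1 + c * x) * (1 + 2 * c * x) * (u x)\<^sup>2
              - (4 * (n + c) * x * (1 + c * x) + 1) * u x + 2 * n * (1 + 2 * c * x))"
proof (cases "c \<ge> 0")
  case True
  then have "n > c" using assms(2) by simp
  obtain U S S1 S2 where sol: "Snc_ode_solution c n U S S1 S2"
    and cont: "\<And>x. x \<ge> 0 \<Longrightarrow> isCont S2 x"
    and init: "S 0 = 1" "S1 0 = - 2 * n" "S2 0 = 6 * n\<^sup>2 + 2 * n * c"
    using Snc_ode_solution_nonneg[OF True \<open>n > c\<close>] by metis
  interpret Snc_ode_solution c n U S S1 S2 by (fact sol)
  show ?thesis
    using Rnc_concave_strict_mono[OF True \<open>n > c\<close> cont init] Rnc_riccati_exists by blast
next
  case False
  then obtain l :: nat where "c < 0" "n = - c * real l" using assms(2) by auto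
  then obtain U S S1 S2 where sol: "Snc_ode_solution c n U S S1 S2" by (rule Snc_ode_solution_neg)
  interpret Snc_ode_solution c n U S S1 S2 by (fact sol)
  show ?thesis using Rnc_riccati_exists False by blast
qed

end
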